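(* Let $\theta=\theta^je_j\in su(N)$ be a dependent variable of $x^1,x^2$, and let $\vec w_C=(f(x^1)\theta^j_1+g(x^2)\theta^j_2)\partial/\partial\theta^j$ be the generalized vector field associated with a conformal transformation. Then for every integer $k\ge0$ (wherever the iterated projectors are defined), $$\mathrm{pr}\,\vec w_C\big(\Pi_\pm^k(\mathcal E-i\theta)\big)=fD_1\Pi_\pm^k(\mathcal E-i\theta)+gD_2\Pi_\pm^k(\mathcal E-i\theta).$$ That is, the infinitesimal deformation $\theta'=\theta+\epsilon(f\theta_1+g\theta_2)$ induces the infinitesimal deformation $\big(\Pi_\pm^k(\mathcal E-i\theta)\big)'=\Pi_\pm^k(\mathcal E-i\theta)+\epsilon\big(fD_1\Pi_\pm^k(\mathcal E-i\theta)+gD_2\Pi_\pm^k(\mathcal E-i\theta)\big)$.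
   Context: $\mathcal E=\mathbb I/N$; $e_j$ is a basis of $su(N)$; $x^1=\xi$, $x^2=\bar\xi$ (Euclidean setting of the $\mathbb CP^{N-1}$ sigma model); $D_1,D_2$ are total derivatives in $x^1,x^2$; $\theta^j_J$ are jet coordinates. The raising and lowering operators on a matrix function $P$ are $$\Pi_+P=\frac{D_1P\,P\,D_2P}{\mathrm{tr}(D_1P\,P\,D_2P)},\qquad \Pi_-P=\frac{D_2P\,P\,D_1P}{\mathrm{tr}(D_2P\,P\,D_1P)},$$ and $\Pi_\pm^k$ denotes the $k$-fold iterate ($\Pi_\pm^0$ the identity); thus $\Pi_\pm^k(\mathcal E-i\theta)$ is a matrix-valued function of the jets of $\theta$. The prolongation is $\mathrm{pr}\,\vec w_C=\sum_J D_J(f\theta^j_1+g\theta^j_2)\,\partial/\partial\theta^j_J$. *)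

theory Defs
  imports "HOL-Analysis.Analysis"
begin

type_synonym 'n cmat = "complex^'n^'n"

definition cscale :: "complex \<Rightarrow> 'n::finite cmat \<Rightarrow> 'n cmat" where
  "cscale c M = (\<chi> i j. c * M$i$j)"

definition cadj :: "'n::finite cmat \<Rightarrow> 'n cmat" where
  "cadj M = (\<chi> i j. cnj (M$j$i))"

definition su :: "'n::finite cmat set" where
  "su = {A. cadj A = - A \<and> trace A = 0}"

definition Emat :: "'n::finite cmat" where
  "Emat = cscale (1 / of_nat CARD('n)) (mat 1)"

definition pd1 :: "(real \<times> real \<Rightarrow> 'a::real_normed_vector) \<Rightarrow> real \<times> real \<Rightarrow> 'a" where
  "pd1 P x = vector_derivative (\<lambda>t. P (t, snd x)) (at (fst x))"

definition pd2 :: "(real \<times> real \<Rightarrow> 'a::real_normed_vector) \<Rightarrow> real \<times> real \<Rightarrow> 'a" where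
  "pd2 P x = vector_derivative (\<lambda>t. P (fst x, t)) (at (snd x))"

fun iter_pd :: "bool list \<Rightarrow> (real \<times> real \<Rightarrow> 'a::real_normed_vector) \<Rightarrow> real \<times> real \<Rightarrow> 'a" where
  "iter_pd [] P = P"
| "iter_pd (b # bs) P = (if b then pd1 else pd2) (iter_pd bs P)"

definition smooth2 :: "(real \<times> real \<Rightarrow> 'a::real_normed_vector) \<Rightarrow> bool" where
  "smooth2 P \<longleftrightarrow> (\<forall>bs x. iter_pd bs P differentiable (at x))"

definition iter_vd :: "nat \<Rightarrow> (real \<Rightarrow> 'a::real_normed_vector) \<Rightarrow> real \<Rightarrow> 'a" where
  "iter_vd n f = ((\<lambda>h t. vector_derivative h (at t)) ^^ n) f"

definition smooth1 :: "(real \<Rightarrow> 'a::real_normed_vector) \<Rightarrow> bool" where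
  "smooth1 f \<longleftrightarrow> (\<forall>n t. iter_vd n f differentiable (at t))"

text \<open>Raising (s = True, Pi_+) and lowering (s = False, Pi_-) operators.
  denom s P x is the trace in the denominator; division by 0 gives 0 in HOL,
  definedness is imposed separately by requiring nonzero denominators.\<close>
definition numer :: "bool \<Rightarrow> (real \<times> real \<Rightarrow> 'n::finite cmat) \<Rightarrow> real \<times> real \<Rightarrow> 'n cmat" where
  "numer s P x = (if s then pd1 P x ** P x ** pd2 P x else pd2 P x ** P x ** pd1 P x)"

definition denom :: "bool \<Rightarrow> (real \<times> real \<Rightarrow> 'n::finite cmat) \<Rightarrow> real \<times> real \<Rightarrow> complex" where
  "denom s P x = trace (numer s P x)"

definition Pi_op :: "bool \<Rightarrow> (real \<times> real \<Rightarrow> 'n::finite cmat) \<Rightarrow> real \<times> real \<Rightarrow> 'n cmat" where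
  "Pi_op s P x = cscale (inverse (denom s P x)) (numer s P x)"

end

theory Submission
  imports Defs
begin

text \<open>Adjoin \<open>\<epsilon>\<close> as a coordinate and let \<open>L = \<partial>\<^sub>\<epsilon> - f D\<^sub>1 - g D\<^sub>2\<close> act on functions of
  \<open>(\<epsilon>, x)\<close>. The claim is that \<open>L\<close> annihilates, on the slice \<open>\<epsilon> = 0\<close>, every entry of
  \<open>\<Pi>\<^sub>\<plusminus>\<^sup>k\<close> applied to the deformed field. If \<open>L\<close> annihilates the entries of \<open>P\<close> on the slice, then, mixed derivatives
  commuting, \<open>L D\<^sub>1 P = f' D\<^sub>1 P\<close> and \<open>L D\<^sub>2 P = g' D\<^sub>2 P\<close> there; as \<open>L\<close> is a derivation,
  the numerator of \<open>\<Pi>\<^sub>\<plusminus> P\<close> and its trace both scale by \<open>f' + g'\<close>, which cancels in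
  the quotient.\<close>

section \<open>Directional derivatives and smoothness\<close>

definition dirderiv :: "'a::real_normed_vector \<Rightarrow> ('a \<Rightarrow> 'b::real_normed_vector) \<Rightarrow> 'a \<Rightarrow> 'b" where
  "dirderiv v F p = frechet_derivative F (at p) v"

coinductive smooth_on :: "'a::real_normed_vector set \<Rightarrow> ('a \<Rightarrow> 'b::real_normed_field) \<Rightarrow> bool"
  for S where
  smooth_onI: "(\<forall>p\<in>S. F differentiable (at p)) \<Longrightarrow> (\<forall>v. smooth_on S (dirderiv v F)) \<Longrightarrow> smooth_on S F"

text \<open>Once the derivatives of the generators lie in it, this closure is stable under
  \<open>dirderiv\<close>, hence an invariant for proving \<open>smooth_on\<close> by coinduction.\<close>
inductive smooth_alg :: "'a::real_normed_vector set \<Rightarrow> ('a \<Rightarrow> 'b::real_normed_field) set \<Rightarrow> ('a \<Rightarrow> 'b) \<Rightarrow> bool"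
  for S Gen where
  gen: "F \<in> Gen \<Longrightarrow> smooth_alg S Gen F"
| smooth: "smooth_on S F \<Longrightarrow> smooth_alg S Gen F"
| add: "smooth_alg S Gen F \<Longrightarrow> smooth_alg S Gen G \<Longrightarrow> smooth_alg S Gen (\<lambda>p. F p + G p)"
| mult: "smooth_alg S Gen F \<Longrightarrow> smooth_alg S Gen G \<Longrightarrow> smooth_alg S Gen (\<lambda>p. F p * G p)"
| inverse: "smooth_alg S Gen F \<Longrightarrow> \<forall>p\<in>S. F p \<noteq> 0 \<Longrightarrow> smooth_alg S Gen (\<lambda>p. inverse (F p))"
| cong: "smooth_alg S Gen F \<Longrightarrow> \<forall>p\<in>S. G p = F p \<Longrightarrow> smooth_alg S Gen G"

lemma dirderiv_eq: "(F has_derivative F') (at p) \<Longrightarrow> dirderiv v F p = F' v"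
  unfolding dirderiv_def using frechet_derivative_at by metis

lemma dirderiv_fun_eq: "(\<And>p. (F has_derivative F' p) (at p)) \<Longrightarrow> dirderiv v F = (\<lambda>p. F' p v)"
  by (simp add: fun_eq_iff dirderiv_eq)

lemma has_derivative_dirderiv:
  "F differentiable (at p) \<Longrightarrow> (F has_derivative (\<lambda>v. dirderiv v F p)) (at p)"
  unfolding dirderiv_def using frechet_derivative_works by (metis eta_contract_eq)

lemma dirderiv_add:
  "F differentiable (at p) \<Longrightarrow> G differentiable (at p) \<Longrightarrow>
   dirderiv v (\<lambda>q. F q + G q) p = dirderiv v F p + dirderiv v G p"
  by (rule dirderiv_eq, intro has_derivative_add has_derivative_dirderiv)

lemma dirderiv_diff:
  "F differentiable (at p) \<Longrightarrow> G differentiable (at p) \<Longrightarrow>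
   dirderiv v (\<lambda>q. F q - G q) p = dirderiv v F p - dirderiv v G p"
  by (rule dirderiv_eq, intro has_derivative_diff has_derivative_dirderiv)

lemma dirderiv_mult:
  fixes F G :: "'a::real_normed_vector \<Rightarrow> 'b::real_normed_algebra"
  shows "F differentiable (at p) \<Longrightarrow> G differentiable (at p) \<Longrightarrow>
   dirderiv v (\<lambda>q. F q * G q) p = F p * dirderiv v G p + dirderiv v F p * G p"
  by (rule dirderiv_eq, intro has_derivative_mult has_derivative_dirderiv)

lemma dirderiv_inverse:
  fixes F :: "'a::real_normed_vector \<Rightarrow> 'b::real_normed_div_algebra"
  assumes "F differentiable (at p)" "F p \<noteq> 0"
  shows "dirderiv v (\<lambda>q. inverse (F q)) p = - (inverse (F p) * dirderiv v F p * inverse (F p))"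
  by (rule dirderiv_eq, rule Deriv.has_derivative_inverse) (use assms has_derivative_dirderiv in auto)

lemma dirderiv_sum:
  "finite I \<Longrightarrow> (\<And>i. i \<in> I \<Longrightarrow> F i differentiable (at p)) \<Longrightarrow>
   dirderiv v (\<lambda>q. \<Sum>i\<in>I. F i q) p = (\<Sum>i\<in>I. dirderiv v (F i) p)"
  by (rule dirderiv_eq, intro has_derivative_sum has_derivative_dirderiv)

lemma dirderiv_scaleR: "F differentiable (at p) \<Longrightarrow> dirderiv (c *\<^sub>R v) F p = c *\<^sub>R dirderiv v F p"
  unfolding dirderiv_def using linear_frechet_derivative linear_scale by blast

lemma dirderiv_cong_open:
  "open S \<Longrightarrow> p \<in> S \<Longrightarrow> \<forall>q\<in>S. G q = F q \<Longrightarrow> F differentiable (at p) \<Longrightarrow>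
   dirderiv v G p = dirderiv v F p"
  by (rule dirderiv_eq, rule has_derivative_transform_within_open[OF has_derivative_dirderiv]) auto

lemma differentiable_cong_open:
  "open S \<Longrightarrow> p \<in> S \<Longrightarrow> \<forall>q\<in>S. G q = F q \<Longrightarrow> F differentiable (at p) \<Longrightarrow>
   G differentiable (at p)"
  unfolding differentiable_def by (metis has_derivative_transform_within_open)

lemma dirderiv_const [simp]: "dirderiv v (\<lambda>q. c) = (\<lambda>q. 0)"
  unfolding dirderiv_def by (rule ext) simp

lemma smooth_on_differentiable: "smooth_on S F \<Longrightarrow> p \<in> S \<Longrightarrow> F differentiable (at p)"
  by (auto elim: smooth_on.cases)

lemma smooth_on_dirderiv: "smooth_on S F \<Longrightarrow> smooth_on S (dirderiv v F)"
  by (auto elim: smooth_on.cases)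

lemma smooth_on_const: "smooth_on S (\<lambda>p. c)"
proof -
  have "\<exists>c. F = (\<lambda>p. c) \<Longrightarrow> smooth_on S F" for F
    by (coinduction arbitrary: F) auto
  then show ?thesis by blast
qed

lemma smooth_on_subset: "smooth_on S F \<Longrightarrow> S' \<subseteq> S \<Longrightarrow> smooth_on S' F"
  by (coinduction arbitrary: F) (auto elim: smooth_on.cases)

context
  fixes S :: "'a::real_normed_vector set" and Gen :: "('a \<Rightarrow> 'b::real_normed_field) set"
  assumes S: "open S"
    and gen_differentiable: "\<forall>F\<in>Gen. \<forall>p\<in>S. F differentiable (at p)"
begin

lemma smooth_alg_differentiable: "smooth_alg S Gen F \<Longrightarrow> p \<in> S \<Longrightarrow> F differentiable (at p)"
proof (induction arbitrary: p rule: smooth_alg.induct)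
  case (cong F G)
  then show ?case using differentiable_cong_open[OF S] by blast
qed (use gen_differentiable in \<open>auto intro: differentiable_add differentiable_mult
  differentiable_inverse smooth_on_differentiable\<close>)

lemma smooth_alg_dirderiv:
  assumes gen_dirderiv: "\<forall>F\<in>Gen. \<forall>v. smooth_alg S Gen (dirderiv v F)"
  shows "smooth_alg S Gen F \<Longrightarrow> smooth_alg S Gen (dirderiv v F)"
proof (induction rule: smooth_alg.induct)
  case (add F G)
  have "smooth_alg S Gen (\<lambda>p. dirderiv v F p + dirderiv v G p)"
    using add by (intro smooth_alg.add)
  then show ?case
    by (rule smooth_alg.cong) (auto intro!: dirderiv_add smooth_alg_differentiable add)
next
  case (mult F G)
  have "smooth_alg S Gen (\<lambda>p. F p * dirderiv v G p + dirderiv v F p * G p)"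
    using mult by (intro smooth_alg.add smooth_alg.mult)
  then show ?case
    by (rule smooth_alg.cong) (auto intro!: dirderiv_mult smooth_alg_differentiable mult)
next
  case (inverse F)
  have "smooth_alg S Gen (\<lambda>p. (-1) * (inverse (F p) * dirderiv v F p * inverse (F p)))"
    by (intro smooth_alg.mult smooth_alg.smooth[OF smooth_on_const] smooth_alg.inverse)
       (use inverse in auto)
  then show ?case
    by (rule smooth_alg.cong)
       (use inverse(2) in \<open>auto intro!: dirderiv_inverse smooth_alg_differentiable inverse\<close>)
next
  case (cong F G)
  then show ?case
    by (intro smooth_alg.cong[OF cong(3)])
       (auto intro!: dirderiv_cong_open[OF S] smooth_alg_differentiable)
qed (use gen_dirderiv in \<open>auto elim: smooth_on.cases intro: smooth_alg.smooth\<close>)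

lemma smooth_alg_smooth_on:
  assumes "\<forall>F\<in>Gen. \<forall>v. smooth_alg S Gen (dirderiv v F)"
  shows "smooth_alg S Gen F \<Longrightarrow> smooth_on S F"
  by (coinduction arbitrary: F) (use smooth_alg_differentiable smooth_alg_dirderiv[OF assms] in blast)

end

lemma smooth_on_smooth_alg: "open S \<Longrightarrow> smooth_alg S {} F \<Longrightarrow> smooth_on S F"
  by (rule smooth_alg_smooth_on) auto

lemma smooth_on_add: "open S \<Longrightarrow> smooth_on S F \<Longrightarrow> smooth_on S G \<Longrightarrow> smooth_on S (\<lambda>p. F p + G p)"
  by (rule smooth_on_smooth_alg, assumption, intro smooth_alg.add smooth_alg.smooth)

lemma smooth_on_mult: "open S \<Longrightarrow> smooth_on S F \<Longrightarrow> smooth_on S G \<Longrightarrow> smooth_on S (\<lambda>p. F p * G p)"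
  by (rule smooth_on_smooth_alg, assumption, intro smooth_alg.mult smooth_alg.smooth)

lemma smooth_on_inverse:
  "open S \<Longrightarrow> smooth_on S F \<Longrightarrow> \<forall>p\<in>S. F p \<noteq> 0 \<Longrightarrow> smooth_on S (\<lambda>p. inverse (F p))"
  by (rule smooth_on_smooth_alg, assumption, intro smooth_alg.inverse smooth_alg.smooth)

lemma smooth_on_cong: "open S \<Longrightarrow> smooth_on S F \<Longrightarrow> \<forall>p\<in>S. G p = F p \<Longrightarrow> smooth_on S G"
  by (rule smooth_on_smooth_alg, assumption, rule smooth_alg.cong[OF smooth_alg.smooth])

lemma smooth_on_diff: "open S \<Longrightarrow> smooth_on S F \<Longrightarrow> smooth_on S G \<Longrightarrow> smooth_on S (\<lambda>p. F p - G p)"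
  using smooth_on_add[of S F "\<lambda>p. (-1) * G p"] smooth_on_mult[OF _ smooth_on_const, of S G "-1"]
  by simp

lemma smooth_on_sum:
  assumes "open S"
  shows "finite I \<Longrightarrow> (\<And>i. i \<in> I \<Longrightarrow> smooth_on S (F i)) \<Longrightarrow> smooth_on S (\<lambda>p. \<Sum>i\<in>I. F i p)"
  by (induction I rule: finite_induct) (simp_all add: smooth_on_const smooth_on_add assms)

lemma has_vector_derivative_line:
  assumes "F differentiable (at (q + t *\<^sub>R v))"
  shows "((\<lambda>t. F (q + t *\<^sub>R v)) has_vector_derivative dirderiv v F (q + t *\<^sub>R v)) (at t)"
proof -
  have "((\<lambda>t. q + t *\<^sub>R v) has_derivative (\<lambda>h. h *\<^sub>R v)) (at t)"
    by (auto intro!: derivative_eq_intros)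
  from has_derivative_compose[OF this has_derivative_dirderiv[OF assms]]
  show ?thesis
    unfolding has_vector_derivative_def by (simp add: o_def dirderiv_scaleR[OF assms])
qed

lemma mean_value_bound:
  fixes \<phi> :: "real \<Rightarrow> 'a::real_normed_vector"
  assumes "\<And>t. t \<in> closed_segment 0 h \<Longrightarrow> (\<phi> has_vector_derivative \<phi>' t) (at t)"
    and "\<And>t. t \<in> closed_segment 0 h \<Longrightarrow> norm (\<phi>' t - c) \<le> B"
  shows "norm (\<phi> h - \<phi> 0 - h *\<^sub>R c) \<le> B * \<bar>h\<bar>"
proof -
  have "norm ((\<phi> h - h *\<^sub>R c) - (\<phi> 0 - 0 *\<^sub>R c)) \<le> B * norm (h - 0)"
  proof (rule differentiable_bound[where f' = "\<lambda>t x. x *\<^sub>R (\<phi>' t - c)" and S = "closed_segment 0 h"])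
    fix x assume x: "x \<in> closed_segment 0 h"
    have "((\<lambda>t. \<phi> t - t *\<^sub>R c) has_derivative (\<lambda>y. y *\<^sub>R (\<phi>' x - c))) (at x)"
      using assms(1)[OF x] unfolding has_vector_derivative_def
      by (auto intro!: derivative_eq_intros simp: algebra_simps)
    then show "((\<lambda>t. \<phi> t - t *\<^sub>R c) has_derivative (\<lambda>y. y *\<^sub>R (\<phi>' x - c)))
        (at x within closed_segment 0 h)"
      by (rule has_derivative_at_withinI)
    have "onorm (\<lambda>y::real. y *\<^sub>R (\<phi>' x - c)) = onorm (\<lambda>y::real. y) * norm (\<phi>' x - c)"
      by (rule onorm_scaleR_left) (rule bounded_linear_ident)
    also have "onorm (\<lambda>y::real. y) = 1"
      using onorm_id by (metis id_def)
    finally show "onorm (\<lambda>y::real. y *\<^sub>R (\<phi>' x - c)) \<le> B" using assms(2)[OF x] by simp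
  qed auto
  then show ?thesis by (simp add: algebra_simps)
qed

text \<open>Two applications of the mean value theorem, first along \<open>v\<close> and then along \<open>u\<close>.\<close>
lemma second_difference_bound:
  fixes F :: "'a::real_normed_vector \<Rightarrow> 'b::real_normed_field"
  assumes F: "smooth_on S F"
    and box: "\<And>s t. \<bar>s\<bar> \<le> \<bar>h\<bar> \<Longrightarrow> \<bar>t\<bar> \<le> \<bar>h\<bar> \<Longrightarrow> p + s *\<^sub>R u + t *\<^sub>R v \<in> S"
    and near: "\<And>s t. \<bar>s\<bar> \<le> \<bar>h\<bar> \<Longrightarrow> \<bar>t\<bar> \<le> \<bar>h\<bar> \<Longrightarrow>
      norm (dirderiv v (dirderiv u F) (p + s *\<^sub>R u + t *\<^sub>R v) - C) \<le> e"
  shows "norm (F (p + h *\<^sub>R (u + v)) - F (p + h *\<^sub>R u) - F (p + h *\<^sub>R v) + F p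
          - (h * h) *\<^sub>R C) \<le> e * (h * h)"
proof -
  define G where "G = dirderiv u F"
  have G: "smooth_on S G" unfolding G_def using F by (rule smooth_on_dirderiv)
  have seg: "\<bar>t\<bar> \<le> \<bar>h\<bar>" if "t \<in> closed_segment 0 h" for t
    using that by (auto simp: closed_segment_eq_real_ivl split: if_splits)
  have inner: "norm (G (p + s *\<^sub>R u + h *\<^sub>R v) - G (p + s *\<^sub>R u + 0 *\<^sub>R v) - h *\<^sub>R C) \<le> e * \<bar>h\<bar>"
    if s: "\<bar>s\<bar> \<le> \<bar>h\<bar>" for s
  proof (rule mean_value_bound[where \<phi> = "\<lambda>t. G (p + s *\<^sub>R u + t *\<^sub>R v)"])
    fix t assume t: "t \<in> closed_segment 0 h"
    show "((\<lambda>t. G (p + s *\<^sub>R u + t *\<^sub>R v)) has_vector_derivative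
        dirderiv v G (p + s *\<^sub>R u + t *\<^sub>R v)) (at t)"
      by (intro has_vector_derivative_line smooth_on_differentiable[OF G] box s seg t)
    show "norm (dirderiv v G (p + s *\<^sub>R u + t *\<^sub>R v) - C) \<le> e"
      unfolding G_def using near[OF s seg[OF t]] .
  qed
  have swap: "p + h *\<^sub>R v + s *\<^sub>R u = p + s *\<^sub>R u + h *\<^sub>R v" for s
    by (simp add: algebra_simps)
  have "norm ((F (p + h *\<^sub>R v + h *\<^sub>R u) - F (p + h *\<^sub>R u))
          - (F (p + h *\<^sub>R v + 0 *\<^sub>R u) - F (p + 0 *\<^sub>R u)) - h *\<^sub>R (h *\<^sub>R C)) \<le> (e * \<bar>h\<bar>) * \<bar>h\<bar>"
  proof (rule mean_value_bound[where \<phi> = "\<lambda>s. F (p + h *\<^sub>R v + s *\<^sub>R u) - F (p + s *\<^sub>R u)"])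
    fix s assume s: "s \<in> closed_segment 0 h"
    have "p + h *\<^sub>R v + s *\<^sub>R u \<in> S" "p + s *\<^sub>R u \<in> S"
      unfolding swap using box[OF seg[OF s], of h] box[OF seg[OF s], of 0] by simp_all
    then show "((\<lambda>s. F (p + h *\<^sub>R v + s *\<^sub>R u) - F (p + s *\<^sub>R u)) has_vector_derivative
        G (p + h *\<^sub>R v + s *\<^sub>R u) - G (p + s *\<^sub>R u)) (at s)"
      unfolding G_def
      by (intro has_vector_derivative_diff has_vector_derivative_line smooth_on_differentiable[OF F])
    show "norm (G (p + h *\<^sub>R v + s *\<^sub>R u) - G (p + s *\<^sub>R u) - h *\<^sub>R C) \<le> e * \<bar>h\<bar>"
      using inner[OF seg[OF s]] unfolding swap by simp
  qed
  moreover have "F (p + h *\<^sub>R (u + v)) - F (p + h *\<^sub>R u) - F (p + h *\<^sub>R v) + F p - (h * h) *\<^sub>R C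
      = (F (p + h *\<^sub>R v + h *\<^sub>R u) - F (p + h *\<^sub>R u))
        - (F (p + h *\<^sub>R v + 0 *\<^sub>R u) - F (p + 0 *\<^sub>R u)) - h *\<^sub>R (h *\<^sub>R C)"
    by (simp add: algebra_simps)
  ultimately show ?thesis by (simp only:)
qed

lemma norm_scaleR_add_le:
  assumes "\<bar>s\<bar> \<le> c" "\<bar>t\<bar> \<le> c"
  shows "norm (s *\<^sub>R u + t *\<^sub>R v) \<le> c * (norm u + norm v)"
proof -
  have "norm (s *\<^sub>R u + t *\<^sub>R v) \<le> \<bar>s\<bar> * norm u + \<bar>t\<bar> * norm v"
    by (metis norm_scaleR norm_triangle_ineq)
  also have "\<dots> \<le> c * norm u + c * norm v"
    using assms by (auto intro!: add_mono mult_right_mono)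
  finally show ?thesis by (simp add: distrib_left)
qed

lemma second_difference_approx:
  assumes S: "open S" "p \<in> S" and F: "smooth_on S F" and e: "e > 0"
  shows "\<exists>d>0. \<forall>h. \<bar>h\<bar> < d \<longrightarrow>
    norm (F (p + h *\<^sub>R (u + v)) - F (p + h *\<^sub>R u) - F (p + h *\<^sub>R v) + F p
          - (h * h) *\<^sub>R dirderiv v (dirderiv u F) p) \<le> e * (h * h)"
proof -
  let ?H = "dirderiv v (dirderiv u F)"
  have "continuous (at p) ?H"
    by (intro differentiable_imp_continuous_within smooth_on_differentiable[OF _ S(2)]
          smooth_on_dirderiv F)
  then obtain \<delta> where \<delta>: "\<delta> > 0" "\<And>q. dist q p < \<delta> \<Longrightarrow> dist (?H q) (?H p) < e"
    unfolding continuous_at_eps_delta using e by blast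
  obtain r where r: "r > 0" "ball p r \<subseteq> S" using S openE by blast
  define n where "n = norm u + norm v + 1"
  define d where "d = min r \<delta> / n"
  have n: "n > 0" unfolding n_def by (smt (verit) norm_ge_zero)
  have close: "dist (p + s *\<^sub>R u + t *\<^sub>R v) p < min r \<delta>"
    if "\<bar>s\<bar> \<le> \<bar>h\<bar>" "\<bar>t\<bar> \<le> \<bar>h\<bar>" "\<bar>h\<bar> < d" for s t h
  proof -
    have "dist (p + s *\<^sub>R u + t *\<^sub>R v) p \<le> \<bar>h\<bar> * (norm u + norm v)"
      using norm_scaleR_add_le[OF that(1,2)] by (simp add: dist_norm)
    also have "\<dots> \<le> \<bar>h\<bar> * n" unfolding n_def by (intro mult_left_mono) auto
    also have "\<dots> < d * n" using that n by (intro mult_strict_right_mono) auto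
    also have "\<dots> = min r \<delta>" unfolding d_def using n by simp
    finally show ?thesis .
  qed
  show ?thesis
  proof (intro exI[of _ d] conjI allI impI)
    show "d > 0" unfolding d_def using r \<delta> n by simp
    fix h :: real assume h: "\<bar>h\<bar> < d"
    show "norm (F (p + h *\<^sub>R (u + v)) - F (p + h *\<^sub>R u) - F (p + h *\<^sub>R v) + F p
          - (h * h) *\<^sub>R ?H p) \<le> e * (h * h)"
    proof (rule second_difference_bound[OF F])
      fix s t assume st: "\<bar>s\<bar> \<le> \<bar>h\<bar>" "\<bar>t\<bar> \<le> \<bar>h\<bar>"
      show "p + s *\<^sub>R u + t *\<^sub>R v \<in> S"
        using close[OF st h] r(2) by (auto simp: dist_commute)
      show "norm (?H (p + s *\<^sub>R u + t *\<^sub>R v) - ?H p) \<le> e"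
        using \<delta>(2) close[OF st h] by (simp add: dist_norm less_imp_le)
    qed
  qed
qed

text \<open>Schwarz's theorem. Both mixed derivatives approximate the same symmetric second
  difference to \<open>o(h\<^sup>2)\<close>.\<close>
lemma dirderiv_commute:
  assumes S: "open S" "p \<in> S" and F: "smooth_on S F"
  shows "dirderiv v (dirderiv u F) p = dirderiv u (dirderiv v F) p"
proof -
  let ?X = "\<lambda>h. F (p + h *\<^sub>R (u + v)) - F (p + h *\<^sub>R u) - F (p + h *\<^sub>R v) + F p"
  let ?d = "dirderiv v (dirderiv u F) p - dirderiv u (dirderiv v F) p"
  have bound: "norm ?d \<le> 2 * e" if e: "e > 0" for e
  proof -
    obtain d1 where d1: "d1 > 0" "\<And>h. \<bar>h\<bar> < d1 \<Longrightarrow>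
        norm (?X h - (h * h) *\<^sub>R dirderiv v (dirderiv u F) p) \<le> e * (h * h)"
      using second_difference_approx[OF S F e, of u v] by blast
    obtain d2 where d2: "d2 > 0" "\<And>h. \<bar>h\<bar> < d2 \<Longrightarrow>
        norm (F (p + h *\<^sub>R (v + u)) - F (p + h *\<^sub>R v) - F (p + h *\<^sub>R u) + F p
          - (h * h) *\<^sub>R dirderiv u (dirderiv v F) p) \<le> e * (h * h)"
      using second_difference_approx[OF S F e, of v u] by blast
    have X: "?X h = F (p + h *\<^sub>R (v + u)) - F (p + h *\<^sub>R v) - F (p + h *\<^sub>R u) + F p" for h
      by (simp add: algebra_simps)
    define h where "h = min d1 d2 / 2"
    have h: "h > 0" "\<bar>h\<bar> < d1" "\<bar>h\<bar> < d2" unfolding h_def using d1 d2 by auto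
    have "(h * h) * norm ?d = norm ((?X h - (h * h) *\<^sub>R dirderiv u (dirderiv v F) p)
        - (?X h - (h * h) *\<^sub>R dirderiv v (dirderiv u F) p))"
      by (simp add: algebra_simps flip: scaleR_diff_right)
    also have "\<dots> \<le> norm (?X h - (h * h) *\<^sub>R dirderiv u (dirderiv v F) p)
        + norm (?X h - (h * h) *\<^sub>R dirderiv v (dirderiv u F) p)"
      by (rule norm_triangle_ineq4)
    also have "\<dots> \<le> e * (h * h) + e * (h * h)"
      using d2(2)[OF h(3)] d1(2)[OF h(2)] unfolding X by (rule add_mono)
    finally show ?thesis using h(1) by (simp add: algebra_simps mult_le_cancel_left_pos)
  qed
  have "norm ?d \<le> 0"
  proof (rule field_le_epsilon)
    fix e :: real assume "e > 0"
    then show "norm ?d \<le> 0 + e" using bound[of "e / 2"] by simp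
  qed
  then show ?thesis by simp
qed

lemma has_vector_derivative_vec:
  fixes F :: "real \<Rightarrow> 'a::real_normed_vector^'n"
  assumes "\<And>i. ((\<lambda>t. F t $ i) has_vector_derivative (d $ i)) (at t)"
  shows "(F has_vector_derivative d) (at t)"
proof -
  have "((\<lambda>y. ((F y - F t) - (y - t) *\<^sub>R d) /\<^sub>R norm (y - t)) \<longlongrightarrow> 0) (at t)"
  proof (rule vec_tendstoI)
    fix i
    from assms[of i]
    have "((\<lambda>y. ((F y $ i - F t $ i) - (y - t) *\<^sub>R d $ i) /\<^sub>R norm (y - t)) \<longlongrightarrow> 0) (at t)"
      unfolding has_vector_derivative_def has_derivative_at_within by simp
    then show "((\<lambda>y. (((F y - F t) - (y - t) *\<^sub>R d) /\<^sub>R norm (y - t)) $ i) \<longlongrightarrow> 0 $ i) (at t)"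
      by simp
  qed
  then show ?thesis unfolding has_vector_derivative_def has_derivative_at_within
    by (simp add: bounded_linear_scaleR_left)
qed

lemma has_vector_derivative_line_matrix:
  fixes G :: "'a::real_normed_vector \<Rightarrow> 'b::real_normed_vector^'n^'m"
  assumes "\<And>i j. (\<lambda>p. G p $ i $ j) differentiable (at (q + t *\<^sub>R w))"
  shows "((\<lambda>t. G (q + t *\<^sub>R w)) has_vector_derivative
      (\<chi> i j. dirderiv w (\<lambda>p. G p $ i $ j) (q + t *\<^sub>R w))) (at t)"
  by (intro has_vector_derivative_vec) (simp add: has_vector_derivative_line[OF assms])

lemma pd1_pd2_has_derivative:
  fixes T :: "real \<times> real \<Rightarrow> 'a::real_normed_vector"
  assumes "(T has_derivative T') (at x)"
  shows "pd1 T x = T' (1, 0)" "pd2 T x = T' (0, 1)"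
proof -
  have lin: "linear T'" using assms has_derivative_linear by blast
  have x: "(T has_derivative T') (at (fst x, snd x))" using assms by simp
  have "((\<lambda>t. T (t, snd x)) has_derivative (\<lambda>h. T' (h, 0))) (at (fst x))"
    by (rule has_derivative_compose[OF has_derivative_Pair[OF has_derivative_ident
          has_derivative_const] x])
  moreover have "(\<lambda>h. T' (h, 0)) = (\<lambda>h. h *\<^sub>R T' (1, 0))"
  proof
    fix h :: real
    show "T' (h, 0) = h *\<^sub>R T' (1, 0)" using linear_scale[OF lin, of h "(1, 0)"] by simp
  qed
  ultimately have "((\<lambda>t. T (t, snd x)) has_vector_derivative T' (1, 0)) (at (fst x))"
    unfolding has_vector_derivative_def by simp
  then show "pd1 T x = T' (1, 0)" unfolding pd1_def by (rule vector_derivative_at)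
  have "((\<lambda>t. T (fst x, t)) has_derivative (\<lambda>h. T' (0, h))) (at (snd x))"
    by (rule has_derivative_compose[OF has_derivative_Pair[OF has_derivative_const
          has_derivative_ident] x])
  moreover have "(\<lambda>h. T' (0, h)) = (\<lambda>h. h *\<^sub>R T' (0, 1))"
  proof
    fix h :: real
    show "T' (0, h) = h *\<^sub>R T' (0, 1)" using linear_scale[OF lin, of h "(0, 1)"] by simp
  qed
  ultimately have "((\<lambda>t. T (fst x, t)) has_vector_derivative T' (0, 1)) (at (snd x))"
    unfolding has_vector_derivative_def by simp
  then show "pd2 T x = T' (0, 1)" unfolding pd2_def by (rule vector_derivative_at)
qed

lemma has_derivative_plane_eq:
  fixes T :: "real \<times> real \<Rightarrow> 'a::real_normed_vector"
  assumes "(T has_derivative T') (at x)"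
  shows "T' w = fst w *\<^sub>R pd1 T x + snd w *\<^sub>R pd2 T x"
proof -
  have lin: "linear T'" using assms has_derivative_linear by blast
  obtain a b where w: "w = (a, b)" by (cases w)
  have "T' (a, b) = T' (a *\<^sub>R (1, 0) + b *\<^sub>R (0, 1))" by simp
  also have "\<dots> = a *\<^sub>R T' (1, 0) + b *\<^sub>R T' (0, 1)"
    by (simp only: linear_add[OF lin] linear_scale[OF lin])
  finally show ?thesis using pd1_pd2_has_derivative[OF assms] w by simp
qed

text \<open>The deformation parameter \<open>\<epsilon>\<close> is adjoined as an extra coordinate, so that
  \<open>\<partial>\<^sub>\<epsilon>\<close>, \<open>D\<^sub>1\<close>, \<open>D\<^sub>2\<close> all become directional derivatives on one space.\<close>
type_synonym epoint = "real \<times> real \<times> real"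

definition dir_eps :: epoint where "dir_eps = (1, 0, 0)"
definition dir_x1 :: epoint where "dir_x1 = (0, 1, 0)"
definition dir_x2 :: epoint where "dir_x2 = (0, 0, 1)"

lemma has_derivative_iter_pd_entry:
  fixes \<theta> :: "real \<times> real \<Rightarrow> 'n::finite cmat"
  assumes "smooth2 \<theta>"
  shows "((\<lambda>p::epoint. iter_pd bs \<theta> (snd p) $ i $ j) has_derivative
     (\<lambda>v. of_real (fst (snd v)) * iter_pd (True # bs) \<theta> (snd p) $ i $ j
        + of_real (snd (snd v)) * iter_pd (False # bs) \<theta> (snd p) $ i $ j)) (at p)"
proof -
  let ?T = "iter_pd bs \<theta>"
  have "?T differentiable (at (snd p))" using assms unfolding smooth2_def by blast
  then have T: "(?T has_derivative frechet_derivative ?T (at (snd p))) (at (snd p))"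
    using frechet_derivative_works by blast
  have "((\<lambda>p. ?T (snd p)) has_derivative (\<lambda>v. frechet_derivative ?T (at (snd p)) (snd v))) (at p)"
    using has_derivative_compose[OF has_derivative_snd[OF has_derivative_ident] T]
    by (simp add: o_def)
  then have "((\<lambda>p. ?T (snd p) $ i $ j) has_derivative
      (\<lambda>v. frechet_derivative ?T (at (snd p)) (snd v) $ i $ j)) (at p)"
    by (rule bounded_linear.has_derivative[OF bounded_linear_vec_nth
          bounded_linear.has_derivative[OF bounded_linear_vec_nth]])
  then show ?thesis
    by (simp only: has_derivative_plane_eq[OF T] vector_add_component vector_scaleR_component
        iter_pd.simps if_True if_False) (simp add: scaleR_conv_of_real)
qed

lemma iter_vd_0: "iter_vd 0 f = f"
  unfolding iter_vd_def by simp

lemma iter_vd_Suc: "iter_vd (Suc n) f t = vector_derivative (iter_vd n f) (at t)"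
  by (simp add: iter_vd_def)

lemma has_derivative_iter_vd_linear:
  fixes f :: "real \<Rightarrow> complex"
  assumes "smooth1 f" "bounded_linear c"
  shows "((\<lambda>p. iter_vd n f (c p)) has_derivative
      (\<lambda>v. of_real (c v) * iter_vd (Suc n) f (c p))) (at p)"
proof -
  have "iter_vd n f differentiable (at (c p))" using assms unfolding smooth1_def by blast
  then have "(iter_vd n f has_derivative (\<lambda>h. h *\<^sub>R iter_vd (Suc n) f (c p))) (at (c p))"
    unfolding iter_vd_Suc has_vector_derivative_def[symmetric] using vector_derivative_works by blast
  from has_derivative_compose[OF bounded_linear_imp_has_derivative[OF assms(2)] this]
  show ?thesis by (simp add: o_def scaleR_conv_of_real)
qed

lemma smooth_on_iter_vd_linear:
  fixes f :: "real \<Rightarrow> complex"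
  assumes "smooth1 f" "bounded_linear c"
  shows "smooth_on S (\<lambda>p. iter_vd n f (c p))"
proof -
  have "\<exists>a n. F = (\<lambda>p. a * iter_vd n f (c p)) \<Longrightarrow> smooth_on S F" for F
  proof (coinduction arbitrary: F)
    case (smooth_on F)
    then obtain a n where F: "F = (\<lambda>p. a * iter_vd n f (c p))" by blast
    have hd: "(F has_derivative (\<lambda>v. a * (of_real (c v) * iter_vd (Suc n) f (c p)))) (at p)" for p
      unfolding F by (intro has_derivative_mult_right has_derivative_iter_vd_linear assms)
    have "dirderiv v F = (\<lambda>p. (a * of_real (c v)) * iter_vd (Suc n) f (c p))" for v
      by (simp add: dirderiv_fun_eq[OF hd] mult.assoc)
    then show ?case using hd unfolding differentiable_def by blast
  qed
  from this[of "\<lambda>p. iter_vd n f (c p)"] show ?thesis by (metis mult_1)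
qed

lemma smooth_on_linear:
  assumes "bounded_linear c"
  shows "smooth_on S (\<lambda>p. complex_of_real (c p))"
proof (rule smooth_onI)
  have hd: "((\<lambda>p. complex_of_real (c p)) has_derivative (\<lambda>v. of_real (c v))) (at p)" for p
    using bounded_linear.has_derivative[OF bounded_linear_of_real
        bounded_linear_imp_has_derivative[OF assms]] .
  then show "\<forall>p\<in>S. (\<lambda>p. complex_of_real (c p)) differentiable (at p)"
    unfolding differentiable_def by blast
  then show "\<forall>v. smooth_on S (dirderiv v (\<lambda>p. complex_of_real (c p)))"
    by (simp add: dirderiv_fun_eq[OF hd] smooth_on_const)
qed

lemma smooth_on_iter_pd_entry:
  fixes \<theta> :: "real \<times> real \<Rightarrow> 'n::finite cmat"
  assumes "smooth2 \<theta>"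
  shows "smooth_on UNIV (\<lambda>p::epoint. iter_pd bs \<theta> (snd p) $ i $ j)"
proof -
  let ?E = "{(\<lambda>p::epoint. iter_pd bs \<theta> (snd p) $ i $ j) | bs i j. True}"
  show ?thesis
  proof (rule smooth_alg_smooth_on[where Gen = ?E])
    show "\<forall>F\<in>?E. \<forall>p\<in>UNIV. F differentiable (at p)"
      using has_derivative_iter_pd_entry[OF assms] unfolding differentiable_def by blast
    show "\<forall>F\<in>?E. \<forall>v. smooth_alg UNIV ?E (dirderiv v F)"
    proof (clarify)
      fix bs i j and v :: epoint
      have "smooth_alg UNIV ?E (\<lambda>p. of_real (fst (snd v)) * iter_pd (True # bs) \<theta> (snd p) $ i $ j
        + of_real (snd (snd v)) * iter_pd (False # bs) \<theta> (snd p) $ i $ j)"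
        by (intro smooth_alg.add smooth_alg.mult smooth_alg.smooth[OF smooth_on_const]
            smooth_alg.gen) blast+
      then show "smooth_alg UNIV ?E (dirderiv v (\<lambda>p. iter_pd bs \<theta> (snd p) $ i $ j))"
        unfolding dirderiv_fun_eq[OF has_derivative_iter_pd_entry[OF assms]] .
    qed
  qed (auto intro: smooth_alg.gen)
qed

lemma bounded_linear_x1: "bounded_linear (\<lambda>p::epoint. fst (snd p))"
  by (intro bounded_linear_compose[OF bounded_linear_fst] bounded_linear_snd)

lemma bounded_linear_x2: "bounded_linear (\<lambda>p::epoint. snd (snd p))"
  by (intro bounded_linear_compose[OF bounded_linear_snd] bounded_linear_snd)

lemma smooth_on_comp_x1_x2:
  fixes f g :: "real \<Rightarrow> complex"
  assumes "smooth1 f" "smooth1 g"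
  shows "smooth_on S (\<lambda>q::epoint. f (fst (snd q)))" "smooth_on S (\<lambda>q::epoint. g (snd (snd q)))"
  using smooth_on_iter_vd_linear[OF assms(1) bounded_linear_x1, of _ 0]
    smooth_on_iter_vd_linear[OF assms(2) bounded_linear_x2, of _ 0]
  by (simp_all add: iter_vd_0)

section \<open>The operator \<open>\<partial>\<^sub>\<epsilon> - f D\<^sub>1 - g D\<^sub>2\<close>\<close>

definition conf_op :: "(real \<Rightarrow> complex) \<Rightarrow> (real \<Rightarrow> complex) \<Rightarrow> (epoint \<Rightarrow> complex) \<Rightarrow> epoint \<Rightarrow> complex"
  where "conf_op f g F p = dirderiv dir_eps F p
    - f (fst (snd p)) * dirderiv dir_x1 F p - g (snd (snd p)) * dirderiv dir_x2 F p"

lemma conf_op_mult: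
  "F differentiable (at p) \<Longrightarrow> G differentiable (at p) \<Longrightarrow>
   conf_op f g (\<lambda>q. F q * G q) p = conf_op f g F p * G p + F p * conf_op f g G p"
  unfolding conf_op_def by (simp add: dirderiv_mult algebra_simps)

lemma conf_op_inverse:
  assumes "F differentiable (at p)" "F p \<noteq> 0"
  shows "conf_op f g (\<lambda>q. inverse (F q)) p = - (inverse (F p) * conf_op f g F p * inverse (F p))"
  unfolding conf_op_def dirderiv_inverse[OF assms] by algebra

lemma conf_op_sum:
  "finite I \<Longrightarrow> (\<And>i. i \<in> I \<Longrightarrow> F i differentiable (at p)) \<Longrightarrow>
   conf_op f g (\<lambda>q. \<Sum>i\<in>I. F i q) p = (\<Sum>i\<in>I. conf_op f g (F i) p)"
  unfolding conf_op_def by (simp add: dirderiv_sum sum_subtractf sum_distrib_left)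

lemma conf_op_cong_open:
  "open S \<Longrightarrow> p \<in> S \<Longrightarrow> \<forall>q\<in>S. G q = F q \<Longrightarrow> F differentiable (at p) \<Longrightarrow>
   conf_op f g G p = conf_op f g F p"
  unfolding conf_op_def by (simp add: dirderiv_cong_open[of S p G F])

text \<open>Quantities scaling with a common weight under \<open>conf_op\<close> have an invariant quotient;
  this is how the denominator of \<open>\<Pi>\<^sub>\<plusminus>\<close> cancels the weight of the numerator.\<close>
lemma conf_op_quotient_eq_0:
  assumes T: "T differentiable (at q)" "T q \<noteq> 0" and N: "N differentiable (at q)"
    and "conf_op f g T q = c * T q" "conf_op f g N q = c * N q"
  shows "conf_op f g (\<lambda>p. inverse (T p) * N p) q = 0"
proof -
  have "conf_op f g (\<lambda>p. inverse (T p) * N p) q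
      = conf_op f g (\<lambda>p. inverse (T p)) q * N q + inverse (T q) * conf_op f g N q"
    using T N by (intro conf_op_mult differentiable_inverse)
  also have "conf_op f g (\<lambda>p. inverse (T p)) q = - (inverse (T q) * (c * T q) * inverse (T q))"
    using conf_op_inverse[OF T] assms(4) by simp
  finally show ?thesis using T(2) assms(5) by (simp add: field_simps)
qed

lemma dirderiv_eq_0_on_slice:
  fixes H :: "real \<times> 'a::real_normed_vector \<Rightarrow> 'b::real_normed_vector"
  assumes S: "open S" "p \<in> S" and p0: "fst p = 0" and H: "H differentiable (at p)"
    and Z: "\<forall>q\<in>S. fst q = 0 \<longrightarrow> H q = 0" and v0: "fst v = 0"
  shows "dirderiv v H p = 0"
proof -
  have "((\<lambda>t. H (p + t *\<^sub>R v)) has_vector_derivative dirderiv v H (p + 0 *\<^sub>R v)) (at 0)"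
    by (rule has_vector_derivative_line) (use H in simp)
  then have line: "((\<lambda>t. H (p + t *\<^sub>R v)) has_vector_derivative dirderiv v H p) (at 0)" by simp
  let ?T = "(\<lambda>t. p + t *\<^sub>R v) -` S"
  have "open ?T" by (rule open_vimage[OF S(1)]) (auto intro!: continuous_intros)
  moreover have "0 \<in> ?T" "\<And>t. t \<in> ?T \<Longrightarrow> 0 = H (p + t *\<^sub>R v)" using S Z p0 v0 by auto
  ultimately have "((\<lambda>t. H (p + t *\<^sub>R v)) has_vector_derivative 0) (at 0)"
    by (intro has_vector_derivative_transform_within_open[OF has_vector_derivative_const])
  from vector_derivative_unique_at[OF line this] show ?thesis .
qed

lemma dirderiv_x1_coord:
  fixes f :: "real \<Rightarrow> complex"
  shows "smooth1 f \<Longrightarrow> dirderiv v (\<lambda>q::epoint. f (fst (snd q))) p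
    = of_real (fst (snd v)) * iter_vd 1 f (fst (snd p))"
  using dirderiv_eq[OF has_derivative_iter_vd_linear[OF _ bounded_linear_x1, of f 0]]
  by (simp add: iter_vd_0)

lemma dirderiv_x2_coord:
  fixes g :: "real \<Rightarrow> complex"
  shows "smooth1 g \<Longrightarrow> dirderiv v (\<lambda>q::epoint. g (snd (snd q))) p
    = of_real (snd (snd v)) * iter_vd 1 g (snd (snd p))"
  using dirderiv_eq[OF has_derivative_iter_vd_linear[OF _ bounded_linear_x2, of g 0]]
  by (simp add: iter_vd_0)

lemma smooth_on_conf_op:
  "open S \<Longrightarrow> smooth_on S F \<Longrightarrow> smooth1 f \<Longrightarrow> smooth1 g \<Longrightarrow> smooth_on S (conf_op f g F)"
  unfolding conf_op_def
  by (intro smooth_on_diff smooth_on_mult smooth_on_dirderiv smooth_on_comp_x1_x2)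

text \<open>The commutator of \<open>\<partial>\<^sub>v\<close> with \<open>conf_op\<close>; the directional derivatives commute by
  Schwarz, so only the derivatives of the coefficients \<open>f\<close>, \<open>g\<close> survive.\<close>
lemma dirderiv_conf_op:
  assumes S: "open S" "p \<in> S" and F: "smooth_on S F" and f: "smooth1 f" and g: "smooth1 g"
  shows "dirderiv v (conf_op f g F) p = conf_op f g (dirderiv v F) p
    - (of_real (fst (snd v)) * iter_vd 1 f (fst (snd p)) * dirderiv dir_x1 F p
       + of_real (snd (snd v)) * iter_vd 1 g (snd (snd p)) * dirderiv dir_x2 F p)"
proof -
  let ?f = "\<lambda>q::epoint. f (fst (snd q))" and ?g = "\<lambda>q::epoint. g (snd (snd q))"
  have df: "?f differentiable (at p)" "?g differentiable (at p)"
    using has_derivative_iter_vd_linear[OF f bounded_linear_x1, of 0 p]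
      has_derivative_iter_vd_linear[OF g bounded_linear_x2, of 0 p]
    unfolding iter_vd_0 differentiable_def by blast+
  have dF: "dirderiv w F differentiable (at p)" for w
    using smooth_on_differentiable[OF smooth_on_dirderiv[OF F] S(2)] .
  have conf: "conf_op f g F = (\<lambda>q. dirderiv dir_eps F q - ?f q * dirderiv dir_x1 F q
      - ?g q * dirderiv dir_x2 F q)"
    by (simp add: fun_eq_iff conf_op_def)
  have "dirderiv v (conf_op f g F) p = dirderiv v (dirderiv dir_eps F) p
      - (?f p * dirderiv v (dirderiv dir_x1 F) p + dirderiv v ?f p * dirderiv dir_x1 F p)
      - (?g p * dirderiv v (dirderiv dir_x2 F) p + dirderiv v ?g p * dirderiv dir_x2 F p)"
    unfolding conf using df dF
    by (simp add: dirderiv_diff dirderiv_mult)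
  then show ?thesis
    unfolding conf_op_def dirderiv_x1_coord[OF f] dirderiv_x2_coord[OF g]
    by (simp add: dirderiv_commute[OF S F, of v] algebra_simps)
qed

lemma conf_op_dirderiv_x1_x2:
  assumes S: "open S" "p \<in> S" and p0: "fst p = 0" and F: "smooth_on S F"
    and f: "smooth1 f" and g: "smooth1 g"
    and Z: "\<forall>q\<in>S. fst q = 0 \<longrightarrow> conf_op f g F q = 0"
  shows "conf_op f g (dirderiv dir_x1 F) p = iter_vd 1 f (fst (snd p)) * dirderiv dir_x1 F p"
    and "conf_op f g (dirderiv dir_x2 F) p = iter_vd 1 g (snd (snd p)) * dirderiv dir_x2 F p"
proof -
  have "dirderiv v (conf_op f g F) p = 0" if "fst v = 0" for v
    using smooth_on_differentiable[OF smooth_on_conf_op[OF S(1) F f g] S(2)]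
    by (rule dirderiv_eq_0_on_slice[OF S p0 _ Z that])
  from this[of dir_x1] this[of dir_x2] show
    "conf_op f g (dirderiv dir_x1 F) p = iter_vd 1 f (fst (snd p)) * dirderiv dir_x1 F p"
    "conf_op f g (dirderiv dir_x2 F) p = iter_vd 1 g (snd (snd p)) * dirderiv dir_x2 F p"
    unfolding dirderiv_conf_op[OF S F f g] by (simp_all add: dir_x1_def dir_x2_def)
qed

section \<open>Iterating \<open>\<Pi>\<^sub>\<plusminus>\<close> on a one-parameter family\<close>

definition entry_fun :: "(real \<Rightarrow> real \<times> real \<Rightarrow> 'n::finite cmat) \<Rightarrow> 'n \<Rightarrow> 'n \<Rightarrow> epoint \<Rightarrow> complex"
  where "entry_fun Q i j p = Q (fst p) (snd p) $ i $ j"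

lemma pd1_pd2_entry_fun:
  assumes "\<And>i j. entry_fun Q i j differentiable (at p)"
  shows "pd1 (Q (fst p)) (snd p) = (\<chi> i j. dirderiv dir_x1 (entry_fun Q i j) p)"
    and "pd2 (Q (fst p)) (snd p) = (\<chi> i j. dirderiv dir_x2 (entry_fun Q i j) p)"
proof -
  obtain a b c where p: "p = (a, b, c)" by (cases p) auto
  let ?G = "\<lambda>p::epoint. Q (fst p) (snd p)"
  have entry: "(\<lambda>p. ?G p $ i $ j) = entry_fun Q i j" for i j
    by (simp add: fun_eq_iff entry_fun_def)
  have "((\<lambda>t. ?G ((a, 0, c) + t *\<^sub>R dir_x1)) has_vector_derivative
      (\<chi> i j. dirderiv dir_x1 (\<lambda>p. ?G p $ i $ j) ((a, 0, c) + b *\<^sub>R dir_x1))) (at b)"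
    by (rule has_vector_derivative_line_matrix) (use assms in \<open>simp add: entry p dir_x1_def\<close>)
  then show "pd1 (Q (fst p)) (snd p) = (\<chi> i j. dirderiv dir_x1 (entry_fun Q i j) p)"
    unfolding pd1_def p entry by (simp add: dir_x1_def vector_derivative_at)
  have "((\<lambda>t. ?G ((a, b, 0) + t *\<^sub>R dir_x2)) has_vector_derivative
      (\<chi> i j. dirderiv dir_x2 (\<lambda>p. ?G p $ i $ j) ((a, b, 0) + c *\<^sub>R dir_x2))) (at c)"
    by (rule has_vector_derivative_line_matrix) (use assms in \<open>simp add: entry p dir_x2_def\<close>)
  then show "pd2 (Q (fst p)) (snd p) = (\<chi> i j. dirderiv dir_x2 (entry_fun Q i j) p)"
    unfolding pd2_def p entry by (simp add: dir_x2_def vector_derivative_at)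
qed

definition dir_left :: "bool \<Rightarrow> epoint" where "dir_left s = (if s then dir_x1 else dir_x2)"
definition dir_right :: "bool \<Rightarrow> epoint" where "dir_right s = (if s then dir_x2 else dir_x1)"

definition numer_entry :: "bool \<Rightarrow> (real \<Rightarrow> real \<times> real \<Rightarrow> 'n::finite cmat) \<Rightarrow> 'n \<Rightarrow> 'n \<Rightarrow> epoint \<Rightarrow> complex"
  where "numer_entry s Q i j p = (\<Sum>b\<in>UNIV. (\<Sum>a\<in>UNIV.
    dirderiv (dir_left s) (entry_fun Q i a) p * entry_fun Q a b p) * dirderiv (dir_right s) (entry_fun Q b j) p)"

definition denom_fun :: "bool \<Rightarrow> (real \<Rightarrow> real \<times> real \<Rightarrow> 'n::finite cmat) \<Rightarrow> epoint \<Rightarrow> complex"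
  where "denom_fun s Q p = (\<Sum>i\<in>UNIV. numer_entry s Q i i p)"

lemma cscale_nth [simp]: "cscale c M $ i $ j = c * M $ i $ j"
  unfolding cscale_def by simp

lemma numer_nth_eq_numer_entry:
  assumes "\<And>i j. entry_fun Q i j differentiable (at p)"
  shows "numer s (Q (fst p)) (snd p) $ i $ j = numer_entry s Q i j p"
proof -
  have Q: "Q (fst p) (snd p) $ a $ b = entry_fun Q a b p" for a b
    unfolding entry_fun_def ..
  show ?thesis
    unfolding numer_def numer_entry_def dir_left_def dir_right_def matrix_matrix_mult_def
      pd1_pd2_entry_fun[OF assms] Q
    by simp
qed

lemma denom_eq_denom_fun:
  "(\<And>i j. entry_fun Q i j differentiable (at p)) \<Longrightarrow> denom s (Q (fst p)) (snd p) = denom_fun s Q p"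
  unfolding denom_def denom_fun_def trace_def by (simp add: numer_nth_eq_numer_entry)

lemma entry_fun_Pi_op:
  "(\<And>i j. entry_fun Q i j differentiable (at p)) \<Longrightarrow>
   entry_fun (\<lambda>\<epsilon>. Pi_op s (Q \<epsilon>)) i j p = inverse (denom_fun s Q p) * numer_entry s Q i j p"
  unfolding entry_fun_def[of "\<lambda>\<epsilon>. Pi_op s (Q \<epsilon>)"] Pi_op_def
  by (simp add: numer_nth_eq_numer_entry denom_eq_denom_fun flip: denom_def)

context
  fixes S :: "epoint set" and Q :: "real \<Rightarrow> real \<times> real \<Rightarrow> 'n::finite cmat"
    and f g :: "real \<Rightarrow> complex"
  assumes S: "open S" and f: "smooth1 f" and g: "smooth1 g"
    and Q_smooth: "\<And>i j. smooth_on S (entry_fun Q i j)"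
    and Q_conf: "\<And>i j q. q \<in> S \<Longrightarrow> fst q = 0 \<Longrightarrow> conf_op f g (entry_fun Q i j) q = 0"
begin

private abbreviation (input) "left_factor s i b q \<equiv>
  \<Sum>a\<in>UNIV. dirderiv (dir_left s) (entry_fun Q i a) q * entry_fun Q a b q"

lemma numer_entry_unfold:
  "numer_entry s Q i j = (\<lambda>q. \<Sum>b\<in>UNIV. left_factor s i b q * dirderiv (dir_right s) (entry_fun Q b j) q)"
  by (simp add: fun_eq_iff numer_entry_def)

lemma smooth_on_left_factor: "smooth_on S (left_factor s i b)"
  by (intro smooth_on_sum S finite smooth_on_mult smooth_on_dirderiv Q_smooth)

lemma smooth_on_numer_entry: "smooth_on S (numer_entry s Q i j)"
  unfolding numer_entry_unfold
  by (intro smooth_on_sum S finite smooth_on_mult smooth_on_left_factor smooth_on_dirderiv Q_smooth)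

lemma smooth_on_denom_fun: "smooth_on S (denom_fun s Q)"
  unfolding denom_fun_def[abs_def] by (intro smooth_on_sum S finite smooth_on_numer_entry)

definition conf_weight :: "epoint \<Rightarrow> complex" where
  "conf_weight q = iter_vd 1 f (fst (snd q)) + iter_vd 1 g (snd (snd q))"

lemma conf_op_numer_entry:
  assumes q: "q \<in> S" "fst q = 0"
  shows "conf_op f g (numer_entry s Q i j) q = conf_weight q * numer_entry s Q i j q"
proof -
  let ?l = "if s then iter_vd 1 f (fst (snd q)) else iter_vd 1 g (snd (snd q))"
  let ?r = "if s then iter_vd 1 g (snd (snd q)) else iter_vd 1 f (fst (snd q))"
  have "\<forall>q\<in>S. fst q = 0 \<longrightarrow> conf_op f g (entry_fun Q a b) q = 0" for a b
    using Q_conf by blast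
  note D = conf_op_dirderiv_x1_x2[OF S q Q_smooth f g this] Q_conf[OF q]
  have conf_left: "conf_op f g (dirderiv (dir_left s) (entry_fun Q a b)) q
      = ?l * dirderiv (dir_left s) (entry_fun Q a b) q" for a b
    by (cases s) (simp_all add: dir_left_def D)
  have conf_right: "conf_op f g (dirderiv (dir_right s) (entry_fun Q a b)) q
      = ?r * dirderiv (dir_right s) (entry_fun Q a b) q" for a b
    by (cases s) (simp_all add: dir_right_def D)
  have dQ: "entry_fun Q a b differentiable (at q)" "dirderiv v (entry_fun Q a b) differentiable (at q)"
    for a b v
    using smooth_on_differentiable[OF Q_smooth q(1)]
      smooth_on_differentiable[OF smooth_on_dirderiv[OF Q_smooth] q(1)] by auto
  have dl: "left_factor s i b differentiable (at q)" for i b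
    using smooth_on_differentiable[OF smooth_on_left_factor q(1)] .
  have conf_l: "conf_op f g (left_factor s i b) q = ?l * left_factor s i b q" for i b
    by (simp add: conf_op_sum conf_op_mult dQ conf_left D sum_distrib_left mult.assoc)
  have "conf_op f g (numer_entry s Q i j) q = (\<Sum>b\<in>UNIV.
      conf_op f g (\<lambda>q. left_factor s i b q * dirderiv (dir_right s) (entry_fun Q b j) q) q)"
    unfolding numer_entry_unfold by (rule conf_op_sum) (auto intro: differentiable_mult dl dQ)
  also have "\<dots> = (\<Sum>b\<in>UNIV.
      (?l + ?r) * (left_factor s i b q * dirderiv (dir_right s) (entry_fun Q b j) q))"
    by (intro sum.cong refl)
      (simp only: conf_op_mult[OF dl dQ(2)] conf_l conf_right, simp add: algebra_simps)
  also have "?l + ?r = conf_weight q" unfolding conf_weight_def by simp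
  finally show ?thesis by (simp add: numer_entry_unfold sum_distrib_left)
qed

lemma conf_op_denom_fun:
  "q \<in> S \<Longrightarrow> fst q = 0 \<Longrightarrow> conf_op f g (denom_fun s Q) q = conf_weight q * denom_fun s Q q"
  unfolding denom_fun_def[abs_def]
  by (simp add: conf_op_sum smooth_on_differentiable[OF smooth_on_numer_entry]
      conf_op_numer_entry sum_distrib_left)

text \<open>Shrinking \<open>S\<close> to where the denominator does not vanish.\<close>
lemma Pi_op_family_invariant:
  assumes x0: "(0, x0) \<in> S" and den: "denom s (Q 0) x0 \<noteq> 0"
  obtains S' where "open S'" "(0, x0) \<in> S'"
    "\<And>i j. smooth_on S' (entry_fun (\<lambda>\<epsilon>. Pi_op s (Q \<epsilon>)) i j)"
    "\<And>i j q. q \<in> S' \<Longrightarrow> fst q = 0 \<Longrightarrow> conf_op f g (entry_fun (\<lambda>\<epsilon>. Pi_op s (Q \<epsilon>)) i j) q = 0"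
proof
  let ?T = "denom_fun s Q" and ?N = "numer_entry s Q"
  define S' where "S' = S \<inter> ?T -` (- {0})"
  have dQ: "entry_fun Q i j differentiable (at p)" if "p \<in> S" for i j p
    using smooth_on_differentiable[OF Q_smooth that] .
  have "continuous_on S ?T"
    by (intro continuous_at_imp_continuous_on ballI differentiable_imp_continuous_within
        smooth_on_differentiable[OF smooth_on_denom_fun])
  then show S': "open S'" unfolding S'_def by (rule continuous_open_preimage) (use S in auto)
  show "(0, x0) \<in> S'"
    unfolding S'_def using x0 den denom_eq_denom_fun[OF dQ[OF x0], of s] by simp
  have S'S: "S' \<subseteq> S" and T: "\<And>p. p \<in> S' \<Longrightarrow> ?T p \<noteq> 0" unfolding S'_def by auto
  have eq: "\<forall>p\<in>S'. entry_fun (\<lambda>\<epsilon>. Pi_op s (Q \<epsilon>)) i j p = inverse (?T p) * ?N i j p" for i j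
    using entry_fun_Pi_op[OF dQ] S'S by auto
  have smooth: "smooth_on S' (\<lambda>p. inverse (?T p) * ?N i j p)" for i j
    by (intro smooth_on_mult smooth_on_inverse S' ballI T
        smooth_on_subset[OF smooth_on_denom_fun S'S] smooth_on_subset[OF smooth_on_numer_entry S'S])
  show "smooth_on S' (entry_fun (\<lambda>\<epsilon>. Pi_op s (Q \<epsilon>)) i j)" for i j
    by (rule smooth_on_cong[OF S' smooth eq])
  fix i j q assume q: "q \<in> S'" "fst q = 0"
  then have qS: "q \<in> S" using S'S by auto
  have "conf_op f g (entry_fun (\<lambda>\<epsilon>. Pi_op s (Q \<epsilon>)) i j) q
      = conf_op f g (\<lambda>p. inverse (?T p) * ?N i j p) q"
    by (rule conf_op_cong_open[OF S' q(1) eq])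
       (use smooth_on_differentiable[OF smooth q(1)] in simp)
  also have "\<dots> = 0"
    using smooth_on_differentiable[OF smooth_on_denom_fun qS]
      smooth_on_differentiable[OF smooth_on_numer_entry qS]
    by (rule conf_op_quotient_eq_0[OF _ T[OF q(1)] _ conf_op_denom_fun[OF qS q(2)]
          conf_op_numer_entry[OF qS q(2)]])
  finally show "conf_op f g (entry_fun (\<lambda>\<epsilon>. Pi_op s (Q \<epsilon>)) i j) q = 0" .
qed

end

definition deformed :: "(real \<times> real \<Rightarrow> 'n::finite cmat) \<Rightarrow> (real \<Rightarrow> complex) \<Rightarrow> (real \<Rightarrow> complex)
    \<Rightarrow> real \<Rightarrow> real \<times> real \<Rightarrow> 'n cmat"
  where "deformed \<theta> f g \<epsilon> = (\<lambda>x. Emat - cscale \<i> (\<theta> x + \<epsilon> *\<^sub>R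
    (cscale (f (fst x)) (pd1 \<theta> x) + cscale (g (snd x)) (pd2 \<theta> x))))"

lemma deformed_0: "deformed \<theta> f g 0 = (\<lambda>x. Emat - cscale \<i> (\<theta> x))"
  unfolding deformed_def by simp

context
  fixes \<theta> :: "real \<times> real \<Rightarrow> 'n::finite cmat" and f g :: "real \<Rightarrow> complex" and i j :: 'n
  assumes \<theta>: "smooth2 \<theta>" and f: "smooth1 f" and g: "smooth1 g"
begin

private abbreviation (input) "field_entry (p::epoint) \<equiv>
  f (fst (snd p)) * pd1 \<theta> (snd p) $ i $ j + g (snd (snd p)) * pd2 \<theta> (snd p) $ i $ j"

lemma entry_fun_deformed:
  "entry_fun (deformed \<theta> f g) i j
    = (\<lambda>p. Emat $ i $ j - \<i> * (\<theta> (snd p) $ i $ j + of_real (fst p) * field_entry p))"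
  by (simp add: fun_eq_iff entry_fun_def deformed_def) (simp add: scaleR_conv_of_real)

lemma smooth_on_entries:
  "smooth_on UNIV (\<lambda>p::epoint. \<theta> (snd p) $ i $ j)"
  "smooth_on UNIV (\<lambda>p::epoint. pd1 \<theta> (snd p) $ i $ j)"
  "smooth_on UNIV (\<lambda>p::epoint. pd2 \<theta> (snd p) $ i $ j)"
  using smooth_on_iter_pd_entry[OF \<theta>, of "[]"] smooth_on_iter_pd_entry[OF \<theta>, of "[True]"]
    smooth_on_iter_pd_entry[OF \<theta>, of "[False]"]
  by simp_all

lemma smooth_on_field_entry: "smooth_on UNIV (\<lambda>p. field_entry p)"
  by (intro smooth_on_add smooth_on_mult smooth_on_entries smooth_on_comp_x1_x2[OF f g] open_UNIV)

lemma smooth_on_entry_fun_deformed: "smooth_on UNIV (entry_fun (deformed \<theta> f g) i j)"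
  unfolding entry_fun_deformed
  by (intro smooth_on_diff smooth_on_mult smooth_on_add smooth_on_const smooth_on_entries
      smooth_on_field_entry smooth_on_linear bounded_linear_fst open_UNIV)

lemma conf_op_entry_fun_deformed:
  assumes q0: "fst q = 0"
  shows "conf_op f g (entry_fun (deformed \<theta> f g) i j) q = 0"
proof -
  have h\<theta>: "((\<lambda>p::epoint. \<theta> (snd p) $ i $ j) has_derivative (\<lambda>v. of_real (fst (snd v)) *
      pd1 \<theta> (snd q) $ i $ j + of_real (snd (snd v)) * pd2 \<theta> (snd q) $ i $ j)) (at q)"
    using has_derivative_iter_pd_entry[OF \<theta>, of "[]"] by simp
  have heps: "((\<lambda>p::epoint. complex_of_real (fst p)) has_derivative (\<lambda>v. of_real (fst v))) (at q)"
    by (auto intro!: derivative_eq_intros)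
  have dF: "(\<lambda>p. field_entry p) differentiable (at q)"
    by (rule smooth_on_differentiable[OF smooth_on_field_entry]) simp
  have D: "dirderiv v (entry_fun (deformed \<theta> f g) i j) q
      = - (\<i> * (dirderiv v (\<lambda>p. \<theta> (snd p) $ i $ j) q + of_real (fst v) * field_entry q))" for v
    unfolding entry_fun_deformed using q0 dF h\<theta> heps
    by (simp add: dirderiv_diff dirderiv_mult dirderiv_add dirderiv_eq[OF heps] differentiableI)
  show ?thesis
    unfolding conf_op_def D dirderiv_eq[OF h\<theta>]
    by (simp add: dir_eps_def dir_x1_def dir_x2_def algebra_simps)
qed

end

lemma has_vector_derivative_family:
  assumes d: "\<And>i j. entry_fun Q i j differentiable (at (0, x0))"
    and conf: "\<And>i j. conf_op f g (entry_fun Q i j) (0, x0) = 0"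
  shows "((\<lambda>\<epsilon>. Q \<epsilon> x0) has_vector_derivative
      cscale (f (fst x0)) (pd1 (Q 0) x0) + cscale (g (snd x0)) (pd2 (Q 0) x0)) (at 0)"
proof -
  have "((\<lambda>t. Q (fst ((0, x0) + t *\<^sub>R dir_eps)) (snd ((0, x0) + t *\<^sub>R dir_eps))) has_vector_derivative
      (\<chi> i j. dirderiv dir_eps (\<lambda>p. Q (fst p) (snd p) $ i $ j) ((0, x0) + 0 *\<^sub>R dir_eps))) (at 0)"
    by (rule has_vector_derivative_line_matrix[where G = "\<lambda>p. Q (fst p) (snd p)"])
       (use d in \<open>simp add: entry_fun_def[abs_def]\<close>)
  then have "((\<lambda>\<epsilon>. Q \<epsilon> x0) has_vector_derivative
      (\<chi> i j. dirderiv dir_eps (entry_fun Q i j) (0, x0))) (at 0)"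
    by (simp add: dir_eps_def entry_fun_def[abs_def] zero_prod_def[symmetric])
  moreover have "dirderiv dir_eps (entry_fun Q i j) (0, x0)
      = f (fst x0) * dirderiv dir_x1 (entry_fun Q i j) (0, x0)
        + g (snd x0) * dirderiv dir_x2 (entry_fun Q i j) (0, x0)" for i j
    using conf[of i j] unfolding conf_op_def by (simp add: algebra_simps)
  then have "(\<chi> i j. dirderiv dir_eps (entry_fun Q i j) (0, x0))
      = cscale (f (fst x0)) (pd1 (Q 0) x0) + cscale (g (snd x0)) (pd2 (Q 0) x0)"
    using pd1_pd2_entry_fun[OF d] by (simp add: vec_eq_iff cscale_def)
  ultimately show ?thesis by simp
qed

lemma Pi_op_iterate_invariant:
  fixes \<theta> :: "real \<times> real \<Rightarrow> 'n::finite cmat"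
  assumes \<theta>: "smooth2 \<theta>" and f: "smooth1 f" and g: "smooth1 g"
    and den: "\<forall>m<k. denom s ((Pi_op s ^^ m) (deformed \<theta> f g 0)) x0 \<noteq> 0"
  shows "m \<le> k \<Longrightarrow> \<exists>S. open S \<and> (0, x0) \<in> S
    \<and> (\<forall>i j. smooth_on S (entry_fun (\<lambda>\<epsilon>. (Pi_op s ^^ m) (deformed \<theta> f g \<epsilon>)) i j))
    \<and> (\<forall>i j. \<forall>q\<in>S. fst q = 0 \<longrightarrow> conf_op f g (entry_fun (\<lambda>\<epsilon>. (Pi_op s ^^ m) (deformed \<theta> f g \<epsilon>)) i j) q = 0)"
proof (induction m)
  case 0
  show ?case
    using smooth_on_entry_fun_deformed[OF \<theta> f g] conf_op_entry_fun_deformed[OF \<theta> f g]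
    by (intro exI[of _ UNIV]) (simp add: eta_contract_eq)
next
  case (Suc m)
  then obtain S where S: "open S" "(0, x0) \<in> S"
    "\<And>i j. smooth_on S (entry_fun (\<lambda>\<epsilon>. (Pi_op s ^^ m) (deformed \<theta> f g \<epsilon>)) i j)"
    "\<And>i j q. q \<in> S \<Longrightarrow> fst q = 0 \<Longrightarrow>
      conf_op f g (entry_fun (\<lambda>\<epsilon>. (Pi_op s ^^ m) (deformed \<theta> f g \<epsilon>)) i j) q = 0"
    by auto
  have den_m: "denom s ((Pi_op s ^^ m) (deformed \<theta> f g 0)) x0 \<noteq> 0"
    using den Suc.prems by simp
  obtain S' where "open S'" "(0, x0) \<in> S'"
    "\<And>i j. smooth_on S' (entry_fun (\<lambda>\<epsilon>. Pi_op s ((Pi_op s ^^ m) (deformed \<theta> f g \<epsilon>))) i j)"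
    "\<And>i j q. q \<in> S' \<Longrightarrow> fst q = 0 \<Longrightarrow>
      conf_op f g (entry_fun (\<lambda>\<epsilon>. Pi_op s ((Pi_op s ^^ m) (deformed \<theta> f g \<epsilon>))) i j) q = 0"
    by (rule Pi_op_family_invariant[where S = S and f = f and g = g
          and Q = "\<lambda>\<epsilon>. (Pi_op s ^^ m) (deformed \<theta> f g \<epsilon>)"])
       (use S f g den_m in auto)
  then show ?case by (intro exI[of _ S']) simp
qed

theorem proposition7:
  fixes \<theta> :: "real \<times> real \<Rightarrow> 'n::finite cmat"
    and f g :: "real \<Rightarrow> complex"
    and s :: bool and k :: nat and x0 :: "real \<times> real"
  assumes "smooth2 \<theta>" and "\<forall>x. \<theta> x \<in> su"
    and "smooth1 f" and "smooth1 g"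
    and "\<forall>m<k. denom s ((Pi_op s ^^ m) (\<lambda>x. Emat - cscale \<i> (\<theta> x))) x0 \<noteq> 0"
  shows "((\<lambda>\<epsilon>::real. ((Pi_op s ^^ k)
             (\<lambda>x. Emat - cscale \<i> (\<theta> x + \<epsilon> *\<^sub>R
                  (cscale (f (fst x)) (pd1 \<theta> x) + cscale (g (snd x)) (pd2 \<theta> x))))) x0)
         has_vector_derivative
           (cscale (f (fst x0)) (pd1 ((Pi_op s ^^ k) (\<lambda>x. Emat - cscale \<i> (\<theta> x))) x0)
          + cscale (g (snd x0)) (pd2 ((Pi_op s ^^ k) (\<lambda>x. Emat - cscale \<i> (\<theta> x))) x0)))
         (at 0)"
proof -
  have "\<forall>m<k. denom s ((Pi_op s ^^ m) (deformed \<theta> f g 0)) x0 \<noteq> 0"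
    using assms(5) unfolding deformed_0 .
  from Pi_op_iterate_invariant[OF assms(1,3,4) this order_refl]
  obtain S where S: "open S" "(0, x0) \<in> S"
    and smooth: "\<And>i j. smooth_on S (entry_fun (\<lambda>\<epsilon>. (Pi_op s ^^ k) (deformed \<theta> f g \<epsilon>)) i j)"
    and conf: "\<And>i j. conf_op f g (entry_fun (\<lambda>\<epsilon>. (Pi_op s ^^ k) (deformed \<theta> f g \<epsilon>)) i j) (0, x0) = 0"
    by auto
  have "((\<lambda>\<epsilon>. (Pi_op s ^^ k) (deformed \<theta> f g \<epsilon>) x0) has_vector_derivative
      cscale (f (fst x0)) (pd1 ((Pi_op s ^^ k) (deformed \<theta> f g 0)) x0)
      + cscale (g (snd x0)) (pd2 ((Pi_op s ^^ k) (deformed \<theta> f g 0)) x0)) (at 0)"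
    by (rule has_vector_derivative_family[OF smooth_on_differentiable[OF smooth S(2)] conf])
  then show ?thesis unfolding deformed_0 unfolding deformed_def .
qed

end
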